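(* For all integers $n\ge0$ and $k\ge1$, $$\det\big(a(n+i+j+1,4k)\big)_{0\le i,j\le 2k-1}=(-1)^{k(n-1)}(2k+1)^n$$ and $$\det\big(a(n+i+j,4k-2)\big)_{0\le i,j\le 2k-1}=(-1)^{kn}2^n.$$
   Context: For integers $N,K\ge0$, $a(N,K)=\sum_{s=0}^{K}C_N^{(K)}(0\to s)$, where $C_N^{(K)}(0\to s)$ is the number of lattice paths with steps $(1,1),(1,-1)$ from $(0,0)$ to $(N,s)$ never going below the $x$-axis nor above $y=K$; i.e. $a(N,K)$ is the number of such paths of length $N$ starting at height $0$ with arbitrary end height. *)

theory Defs
  imports "Jordan_Normal_Form.Determinant"
begin

text \<open>A step list: True = up-step (1,1), False = down-step (1,-1).
  The height after the first i steps of a path starting at height 0.\<close>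
definition height :: "bool list \<Rightarrow> nat \<Rightarrow> int" where
  "height ss i = (\<Sum>s\<leftarrow>take i ss. if s then 1 else -1)"

definition bounded_paths :: "nat \<Rightarrow> nat \<Rightarrow> bool list set" where
  "bounded_paths N K = {ss. length ss = N \<and>
     (\<forall>i\<le>N. 0 \<le> height ss i \<and> height ss i \<le> int K)}"

definition a :: "nat \<Rightarrow> nat \<Rightarrow> int" where
  "a N K = int (card (bounded_paths N K))"

end

theory Submission
  imports Defs
begin

text \<open>
  Sorting paths by their end height, \<open>a N K\<close> is the sum of the first column of the
  \<open>N\<close>-th power of the adjacency matrix \<open>A_K\<close> of the path graph on \<open>{0..K}\<close>.
  For \<open>K = 2M\<close>, summing the heights \<open>j, ..., 2M - j\<close> (folding the strip at its middle)
  intertwines \<open>A_2M\<close> with a tridiagonal \<open>(M+1) x (M+1)\<close> matrix \<open>B_M\<close>, so that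
  \<open>a N (2M)\<close> is the corner entry of \<open>B_M^N\<close>. For \<open>M = 2k\<close> a second intertwining, with
  a tridiagonal \<open>2k x 2k\<close> matrix \<open>C_k\<close>, gives \<open>a (N+1) (4k) = (C_k^N)_00\<close>.
  For a tridiagonal \<open>C\<close>, the first row of \<open>C^i\<close> and the first column of \<open>C^j\<close> vanish
  beyond positions \<open>i\<close> and \<open>j\<close>, so the Hankel matrix \<open>((C^(n+i+j))_00)\<close> factors as
  \<open>R C^n Q\<close> with triangular \<open>R\<close> and \<open>Q\<close>. Its determinant is therefore a product of
  off-diagonal entries times \<open>(det C)^n\<close>, and \<open>det B_(2k-1)\<close> and \<open>det C_k\<close> follow from the
  three-term recurrence for tridiagonal determinants.
\<close>

section \<open>Paths sorted by end height\<close>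

lemma height_0 [simp]: "height ss 0 = 0"
  by (simp add: height_def)

lemma height_append: "i \<le> length ss \<Longrightarrow> height (ss @ ts) i = height ss i"
  by (simp add: height_def)

lemma height_snoc: "height (ss @ [s]) (Suc (length ss)) = height ss (length ss) + (if s then 1 else -1)"
  by (simp add: height_def)

lemma finite_bounded_paths: "finite (bounded_paths N K)"
proof (rule finite_subset)
  show "bounded_paths N K \<subseteq> {ss. length ss = N}"
    by (auto simp: bounded_paths_def)
  show "finite {ss :: bool list. length ss = N}"
    using finite_lists_length_eq[of "UNIV :: bool set"] by simp
qed

lemma snoc_in_bounded_paths_iff:
  assumes "length p = N"
  shows "p @ [s] \<in> bounded_paths (Suc N) K \<longleftrightarrow> p \<in> bounded_paths N K \<and>
    0 \<le> height p N + (if s then 1 else -1) \<and> height p N + (if s then 1 else -1) \<le> int K"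
  using assms height_snoc[of p s]
  by (auto simp: bounded_paths_def le_Suc_eq height_append)

definition bounded_paths_to :: "nat \<Rightarrow> nat \<Rightarrow> nat \<Rightarrow> bool list set" where
  "bounded_paths_to N K h = {ss \<in> bounded_paths N K. height ss N = int h}"

lemma finite_bounded_paths_to: "finite (bounded_paths_to N K h)"
  using finite_bounded_paths by (simp add: bounded_paths_to_def)

lemma length_bounded_paths_to: "ss \<in> bounded_paths_to N K h \<Longrightarrow> length ss = N"
  by (simp add: bounded_paths_to_def bounded_paths_def)

lemma bounded_paths_to_0: "bounded_paths_to 0 K h = (if h = 0 then {[]} else {})"
  by (auto simp: bounded_paths_to_def bounded_paths_def)

lemma bounded_paths_to_above: "K < h \<Longrightarrow> bounded_paths_to N K h = {}"
  by (auto simp: bounded_paths_to_def bounded_paths_def)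

lemma snoc_in_bounded_paths_to_iff:
  assumes "length p = N"
  shows "p @ [s] \<in> bounded_paths_to (Suc N) K h \<longleftrightarrow>
    h \<le> K \<and> p \<in> bounded_paths N K \<and> height p N + (if s then 1 else -1) = int h"
  using snoc_in_bounded_paths_iff[OF assms] height_snoc[of p s] assms
  by (auto simp: bounded_paths_to_def)

lemma bounded_paths_to_Suc:
  assumes "h \<le> K"
  shows "bounded_paths_to (Suc N) K h =
    (\<lambda>p. p @ [True]) ` (if h = 0 then {} else bounded_paths_to N K (h - 1)) \<union>
    (\<lambda>p. p @ [False]) ` bounded_paths_to N K (h + 1)"
proof (intro Set.set_eqI iffI)
  fix ss assume ss: "ss \<in> bounded_paths_to (Suc N) K h"
  then have "length ss = Suc N"
    by (rule length_bounded_paths_to)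
  then obtain p s where ps: "ss = p @ [s]" and p: "length p = N"
    by (auto simp: length_Suc_conv_rev)
  have bp: "p \<in> bounded_paths N K" and hp: "height p N + (if s then 1 else -1) = int h"
    using ss by (simp_all add: ps snoc_in_bounded_paths_to_iff[OF p])
  moreover have "height p N \<ge> 0"
    using bp by (simp add: bounded_paths_def)
  ultimately have "if s then h \<noteq> 0 \<and> p \<in> bounded_paths_to N K (h - 1) else p \<in> bounded_paths_to N K (h + 1)"
    by (auto simp: bounded_paths_to_def)
  then show "ss \<in> (\<lambda>p. p @ [True]) ` (if h = 0 then {} else bounded_paths_to N K (h - 1)) \<union>
    (\<lambda>p. p @ [False]) ` bounded_paths_to N K (h + 1)"
    by (cases s) (auto simp: ps)
next
  fix ss assume "ss \<in> (\<lambda>p. p @ [True]) ` (if h = 0 then {} else bounded_paths_to N K (h - 1)) \<union>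
    (\<lambda>p. p @ [False]) ` bounded_paths_to N K (h + 1)"
  then consider p where "h \<noteq> 0" "ss = p @ [True]" "p \<in> bounded_paths_to N K (h - 1)"
    | p where "ss = p @ [False]" "p \<in> bounded_paths_to N K (h + 1)"
    by (auto split: if_splits)
  then show "ss \<in> bounded_paths_to (Suc N) K h"
  proof cases
    case (1 p)
    then have "p \<in> bounded_paths N K" "height p N + 1 = int h"
      by (auto simp: bounded_paths_to_def)
    then show ?thesis
      using 1 assms by (simp add: snoc_in_bounded_paths_to_iff[OF length_bounded_paths_to[OF 1(3)]])
  next
    case (2 p)
    then have "p \<in> bounded_paths N K" "height p N - 1 = int h"
      by (auto simp: bounded_paths_to_def)
    then show ?thesis
      using 2 assms by (simp add: snoc_in_bounded_paths_to_iff[OF length_bounded_paths_to[OF 2(2)]])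
  qed
qed

section \<open>Matrix powers\<close>

lemma index_mult_mat_sum:
  assumes "A \<in> carrier_mat n p" "B \<in> carrier_mat p q" "i < n" "j < q"
  shows "(A * B) $$ (i, j) = (\<Sum>l<p. A $$ (i, l) * B $$ (l, j))"
  using assms by (auto simp: scalar_prod_def atLeast0LessThan intro: sum.cong)

lemma pow_mat_Suc_left:
  fixes A :: "'a :: semiring_1 mat"
  assumes "A \<in> carrier_mat n n"
  shows "A ^\<^sub>m Suc k = A * A ^\<^sub>m k"
proof (induction k)
  case 0
  then show ?case using assms by simp
next
  case (Suc k)
  have "A ^\<^sub>m Suc (Suc k) = (A * A ^\<^sub>m k) * A"
    using Suc by simp
  also have "\<dots> = A * (A ^\<^sub>m k * A)"
    using assms by (simp add: assoc_mult_mat[of _ n n _ n _ n])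
  finally show ?case by simp
qed

lemma pow_mat_add:
  fixes A :: "'a :: semiring_1 mat"
  assumes "A \<in> carrier_mat n n"
  shows "A ^\<^sub>m (k + l) = A ^\<^sub>m k * A ^\<^sub>m l"
proof (induction l)
  case 0
  then show ?case using assms by simp
next
  case (Suc l)
  have "A ^\<^sub>m (k + Suc l) = (A ^\<^sub>m k * A ^\<^sub>m l) * A"
    using Suc by simp
  also have "\<dots> = A ^\<^sub>m k * (A ^\<^sub>m l * A)"
    using assms by (simp add: assoc_mult_mat[of _ n n _ n _ n])
  finally show ?case by simp
qed

lemma transpose_pow_mat:
  fixes A :: "'a :: comm_semiring_1 mat"
  assumes "A \<in> carrier_mat n n"
  shows "transpose_mat (A ^\<^sub>m k) = transpose_mat A ^\<^sub>m k"
proof (induction k)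
  case 0
  then show ?case using assms by simp
next
  case (Suc k)
  have "transpose_mat (A ^\<^sub>m Suc k) = transpose_mat A * transpose_mat (A ^\<^sub>m k)"
    using assms by (simp add: transpose_mult[of _ n n _ n])
  also have "\<dots> = transpose_mat A ^\<^sub>m Suc k"
    using assms Suc pow_mat_Suc_left[of "transpose_mat A" n k] by simp
  finally show ?case .
qed

lemma det_pow_mat:
  fixes A :: "'a :: comm_ring_1 mat"
  assumes "A \<in> carrier_mat n n"
  shows "det (A ^\<^sub>m k) = det A ^ k"
  by (induction k) (use assms in \<open>simp_all add: det_mult[of _ n]\<close>)

lemma intertwining_pow_mat:
  fixes X :: "'a :: semiring_1 mat"
  assumes X: "X \<in> carrier_mat m n" and A: "A \<in> carrier_mat n n" and C: "C \<in> carrier_mat m m"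
    and XA: "X * A = C * X"
  shows "X * A ^\<^sub>m N = C ^\<^sub>m N * X"
proof (induction N)
  case 0
  then show ?case using X A C by simp
next
  case (Suc N)
  have "X * A ^\<^sub>m Suc N = (X * A ^\<^sub>m N) * A"
    using X A by (simp add: assoc_mult_mat[of _ m n _ n _ n])
  also have "\<dots> = C ^\<^sub>m N * (X * A)"
    using X A C by (simp add: Suc assoc_mult_mat[of _ m m _ n _ n])
  also have "\<dots> = C ^\<^sub>m Suc N * X"
    using X C by (simp add: XA assoc_mult_mat[of _ m m _ m _ n] pow_mat_Suc_left[symmetric])
  finally show ?case .
qed

lemma mult_mat_unit_col:
  fixes A :: "'a :: semiring_1 mat"
  assumes "A \<in> carrier_mat m n" "X \<in> carrier_mat n q" "i < m" "j < q" "h < n"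
    and "\<And>l. l < n \<Longrightarrow> X $$ (l, j) = (if l = h then 1 else 0)"
  shows "(A * X) $$ (i, j) = A $$ (i, h)"
  using assms by (subst index_mult_mat_sum[of A m n X q])
    (simp_all add: if_distrib[where f = "\<lambda>x. _ * x"] cong: if_cong)

section \<open>Tridiagonal matrices\<close>

definition tridiag :: "nat \<Rightarrow> (nat \<Rightarrow> 'a :: zero) \<Rightarrow> (nat \<Rightarrow> 'a) \<Rightarrow> (nat \<Rightarrow> 'a) \<Rightarrow> 'a mat" where
  "tridiag n d u l = mat n n (\<lambda>(i, j).
     if i = j then d i else if j = i + 1 then u i else if i = j + 1 then l j else 0)"

lemma tridiag_carrier [simp]: "tridiag n d u l \<in> carrier_mat n n"
  and dim_row_tridiag [simp]: "dim_row (tridiag n d u l) = n"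
  and dim_col_tridiag [simp]: "dim_col (tridiag n d u l) = n"
  by (simp_all add: tridiag_def)

lemma transpose_tridiag: "transpose_mat (tridiag n d u l) = tridiag n d l u"
  by (rule eq_matI) (auto simp: tridiag_def)

lemma tridiag_cong:
  assumes "\<And>i. i < n \<Longrightarrow> d i = d' i"
  shows "tridiag n d u l = tridiag n d' u l"
  using assms by (intro eq_matI) (auto simp: tridiag_def)

lemma sum_lessThan_supported_near:
  fixes f :: "nat \<Rightarrow> 'a :: comm_monoid_add"
  assumes "\<And>j. j < n \<Longrightarrow> j + 1 < i \<or> i + 1 < j \<Longrightarrow> f j = 0"
  shows "(\<Sum>j<n. f j) = (if 0 < i \<and> i \<le> n then f (i - 1) else 0) + (if i < n then f i else 0)
    + (if i + 1 < n then f (i + 1) else 0)"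
  using assms
proof (induction n)
  case 0
  then show ?case by auto
next
  case (Suc n)
  have IH: "(\<Sum>j<n. f j) = (if 0 < i \<and> i \<le> n then f (i - 1) else 0) + (if i < n then f i else 0)
    + (if i + 1 < n then f (i + 1) else 0)"
    using Suc by simp
  have fn: "n + 1 < i \<or> i + 1 < n \<Longrightarrow> f n = 0"
    using Suc.prems by simp
  consider "n + 1 < i \<or> i + 1 < n" | "n + 1 = i" | "n = i" | "n = i + 1"
    by linarith
  then show ?case
    using IH fn by cases (auto simp: add_ac)
qed

lemma tridiag_mult_index:
  fixes d u l :: "nat \<Rightarrow> 'a :: semiring_1"
  assumes X: "X \<in> carrier_mat n q" and i: "i < n" and j: "j < q"
  shows "(tridiag n d u l * X) $$ (i, j) = (if 0 < i then l (i - 1) * X $$ (i - 1, j) else 0)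
    + d i * X $$ (i, j) + (if i + 1 < n then u i * X $$ (i + 1, j) else 0)"
proof -
  let ?T = "tridiag n d u l"
  have "(?T * X) $$ (i, j) = (\<Sum>k<n. ?T $$ (i, k) * X $$ (k, j))"
    using X i j by (intro index_mult_mat_sum) auto
  also have "\<dots> = (if 0 < i \<and> i \<le> n then ?T $$ (i, i - 1) * X $$ (i - 1, j) else 0)
    + (if i < n then ?T $$ (i, i) * X $$ (i, j) else 0)
    + (if i + 1 < n then ?T $$ (i, i + 1) * X $$ (i + 1, j) else 0)"
    using i by (intro sum_lessThan_supported_near) (auto simp: tridiag_def)
  finally show ?thesis
    using i by (auto simp: tridiag_def)
qed

lemma mult_tridiag_index:
  fixes d u l :: "nat \<Rightarrow> 'a :: semiring_1"
  assumes X: "X \<in> carrier_mat p n" and i: "i < p" and j: "j < n"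
  shows "(X * tridiag n d u l) $$ (i, j) = (if 0 < j then X $$ (i, j - 1) * u (j - 1) else 0)
    + X $$ (i, j) * d j + (if j + 1 < n then X $$ (i, j + 1) * l j else 0)"
proof -
  let ?T = "tridiag n d u l"
  have "(X * ?T) $$ (i, j) = (\<Sum>k<n. X $$ (i, k) * ?T $$ (k, j))"
    using X i j by (intro index_mult_mat_sum) auto
  also have "\<dots> = (if 0 < j \<and> j \<le> n then X $$ (i, j - 1) * ?T $$ (j - 1, j) else 0)
    + (if j < n then X $$ (i, j) * ?T $$ (j, j) else 0)
    + (if j + 1 < n then X $$ (i, j + 1) * ?T $$ (j + 1, j) else 0)"
    using j by (intro sum_lessThan_supported_near) (auto simp: tridiag_def)
  finally show ?thesis
    using j by (auto simp: tridiag_def)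
qed

lemma tridiag_pow_first_row:
  fixes d u l :: "nat \<Rightarrow> 'a :: comm_semiring_1"
  assumes "i \<le> h" "h < n"
  shows "(tridiag n d u l ^\<^sub>m i) $$ (0, h) = (if h = i then \<Prod>t<i. u t else 0)"
  using assms
proof (induction i arbitrary: h)
  case 0
  then show ?case by simp
next
  case (Suc i)
  have "(tridiag n d u l ^\<^sub>m Suc i) $$ (0, h) = (tridiag n d u l ^\<^sub>m i * tridiag n d u l) $$ (0, h)"
    by simp
  also have "\<dots> = (if h = Suc i then (\<Prod>t<i. u t) * u i else 0)"
    using Suc by (subst mult_tridiag_index[of _ n]) auto
  finally show ?case
    by simp
qed

lemma tridiag_pow_first_col:
  fixes d u l :: "nat \<Rightarrow> 'a :: comm_semiring_1"
  assumes "j \<le> h" "h < n"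
  shows "(tridiag n d u l ^\<^sub>m j) $$ (h, 0) = (if h = j then \<Prod>t<j. l t else 0)"
proof -
  have "(tridiag n d u l ^\<^sub>m j) $$ (h, 0) = transpose_mat (tridiag n d u l ^\<^sub>m j) $$ (0, h)"
    using assms by simp
  also have "\<dots> = (tridiag n d l u ^\<^sub>m j) $$ (0, h)"
    by (simp add: transpose_pow_mat[of _ n] transpose_tridiag)
  finally show ?thesis
    using tridiag_pow_first_row[OF assms, of d l u] by simp
qed

lemma hankel_pow_factor:
  fixes C :: "'a :: semiring_1 mat"
  assumes C: "C \<in> carrier_mat m m"
  shows "mat m m (\<lambda>(i, j). (C ^\<^sub>m (n + i + j)) $$ (0, 0)) =
    mat m m (\<lambda>(i, h). (C ^\<^sub>m i) $$ (0, h)) * C ^\<^sub>m n * mat m m (\<lambda>(h, j). (C ^\<^sub>m j) $$ (h, 0))"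
    (is "_ = ?R * C ^\<^sub>m n * ?Q")
proof (rule eq_matI)
  fix i j assume "i < dim_row (?R * C ^\<^sub>m n * ?Q)" "j < dim_col (?R * C ^\<^sub>m n * ?Q)"
  then have i: "i < m" and j: "j < m"
    by auto
  have P: "C ^\<^sub>m k \<in> carrier_mat m m" for k
    using C by simp
  have CQ: "C ^\<^sub>m n * ?Q \<in> carrier_mat m m"
    using C by (intro mult_carrier_mat) auto
  have "(?R * C ^\<^sub>m n * ?Q) $$ (i, j) = (?R * (C ^\<^sub>m n * ?Q)) $$ (i, j)"
    using C by (simp add: assoc_mult_mat[of _ m m _ m _ m])
  also have "\<dots> = (\<Sum>h<m. ?R $$ (i, h) * (C ^\<^sub>m n * ?Q) $$ (h, j))"
    using i j CQ by (intro index_mult_mat_sum) auto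
  also have "\<dots> = (C ^\<^sub>m i * (C ^\<^sub>m n * ?Q)) $$ (0, j)"
    using i j CQ P by (simp add: index_mult_mat_sum[of _ m m _ m])
  also have "\<dots> = (C ^\<^sub>m (i + n) * ?Q) $$ (0, j)"
    using C by (simp add: pow_mat_add[of _ m] assoc_mult_mat[of _ m m _ m _ m])
  also have "\<dots> = (\<Sum>h<m. (C ^\<^sub>m (i + n)) $$ (0, h) * (C ^\<^sub>m j) $$ (h, 0))"
    using i j P by (simp add: index_mult_mat_sum[of _ m m _ m])
  also have "\<dots> = (C ^\<^sub>m (i + n) * C ^\<^sub>m j) $$ (0, 0)"
    using i j P by (simp add: index_mult_mat_sum[of _ m m _ m])
  also have "\<dots> = (C ^\<^sub>m (n + i + j)) $$ (0, 0)"
    by (simp only: pow_mat_add[OF C, symmetric] add.commute[of n i])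
  finally show "mat m m (\<lambda>(i, j). (C ^\<^sub>m (n + i + j)) $$ (0, 0)) $$ (i, j) = (?R * C ^\<^sub>m n * ?Q) $$ (i, j)"
    using i j by simp
qed auto

lemma det_hankel_tridiag_pow:
  fixes d u l :: "nat \<Rightarrow> 'a :: comm_ring_1"
  shows "det (mat m m (\<lambda>(i, j). (tridiag m d u l ^\<^sub>m (n + i + j)) $$ (0, 0))) =
    (\<Prod>i<m. (\<Prod>t<i. u t) * (\<Prod>t<i. l t)) * det (tridiag m d u l) ^ n"
proof -
  let ?C = "tridiag m d u l"
  define R where "R = mat m m (\<lambda>(i, h). (?C ^\<^sub>m i) $$ (0, h))"
  define Q where "Q = mat m m (\<lambda>(h, j). (?C ^\<^sub>m j) $$ (h, 0))"
  have R: "R \<in> carrier_mat m m" and Q: "Q \<in> carrier_mat m m"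
    by (simp_all add: R_def Q_def)
  have "det R = (\<Prod>i<m. \<Prod>t<i. u t)"
  proof -
    have "det R = prod_list (diag_mat R)"
      by (rule det_lower_triangular[OF _ R]) (simp add: R_def tridiag_pow_first_row)
    then show ?thesis
      by (simp add: prod_list_diag_prod R_def tridiag_pow_first_row atLeast0LessThan)
  qed
  moreover have "det Q = (\<Prod>j<m. \<Prod>t<j. l t)"
  proof -
    have "upper_triangular Q"
      by (simp add: upper_triangular_def Q_def tridiag_pow_first_col)
    then have "det Q = prod_list (diag_mat Q)"
      using Q by (rule det_upper_triangular)
    then show ?thesis
      by (simp add: prod_list_diag_prod Q_def tridiag_pow_first_col atLeast0LessThan)
  qed
  moreover have "det (R * ?C ^\<^sub>m n * Q) = det R * det ?C ^ n * det Q"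
    using R Q by (simp add: det_mult[of _ m] det_pow_mat[of _ m])
  ultimately show ?thesis
    unfolding hankel_pow_factor[OF tridiag_carrier] R_def[symmetric] Q_def[symmetric]
    by (simp add: prod.distrib ac_simps)
qed

lemma det_tridiag_Suc_Suc:
  fixes d u l :: "nat \<Rightarrow> 'a :: comm_ring_1"
  shows "det (tridiag (Suc (Suc n)) d u l) =
    d (Suc n) * det (tridiag (Suc n) d u l) - u n * l n * det (tridiag n d u l)"
proof -
  let ?A = "tridiag (Suc (Suc n)) d u l"
  define D where "D = mat_delete ?A (Suc n) n"
  have D: "D \<in> carrier_mat (Suc n) (Suc n)"
    unfolding D_def using mat_delete_carrier[OF tridiag_carrier, of "Suc (Suc n)" d u l] by simp
  have delete_last: "mat_delete (tridiag (Suc k) d u l) k k = tridiag k d u l" for k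
    by (rule eq_matI) (auto simp: mat_delete_def tridiag_def)
  have "det D = (\<Sum>i<Suc n. D $$ (i, n) * cofactor D i n)"
    using D by (rule laplace_expansion_column) simp
  also have "\<dots> = u n * cofactor D n n"
    by (subst sum_lessThan_supported_near[where i = n]) (auto simp: D_def mat_delete_def tridiag_def)
  also have "mat_delete D n n = tridiag n d u l"
    by (rule eq_matI) (auto simp: D_def mat_delete_def tridiag_def)
  then have "cofactor D n n = det (tridiag n d u l)"
    by (simp add: cofactor_def)
  finally have det_D: "det D = u n * det (tridiag n d u l)" .
  have "det ?A = (\<Sum>j<Suc (Suc n). ?A $$ (Suc n, j) * cofactor ?A (Suc n) j)"
    by (rule laplace_expansion_row[OF tridiag_carrier]) simp
  also have "\<dots> = l n * cofactor ?A (Suc n) n + d (Suc n) * cofactor ?A (Suc n) (Suc n)"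
    by (subst sum_lessThan_supported_near[where i = "Suc n"]) (auto simp: tridiag_def)
  also have "\<dots> = d (Suc n) * det (tridiag (Suc n) d u l) - u n * l n * det (tridiag n d u l)"
    using det_D by (simp add: cofactor_def D_def delete_last)
  finally show ?thesis .
qed

lemma det_tridiag_eqI:
  fixes d u l f :: "nat \<Rightarrow> 'a :: comm_ring_1"
  assumes "f 0 = 1" "f 1 = d 0"
    and "\<And>k. f (Suc (Suc k)) = d (Suc k) * f (Suc k) - u k * l k * f k"
  shows "det (tridiag n d u l) = f n"
proof (induction n rule: induct_nat_012)
  case 0
  then show ?case
    using assms by (simp add: det_def tridiag_def)
next
  case 1
  then show ?case
    using assms by (simp add: det_single tridiag_def)
next
  case (ge2 k)
  then show ?case
    using assms by (simp add: det_tridiag_Suc_Suc)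
qed

section \<open>Transfer matrices and folding\<close>

definition transfer_mat :: "nat \<Rightarrow> int mat" where
  "transfer_mat K = tridiag (Suc K) (\<lambda>_. 0) (\<lambda>_. 1) (\<lambda>_. 1)"

lemma transfer_mat_carrier: "transfer_mat K \<in> carrier_mat (Suc K) (Suc K)"
  by (simp add: transfer_mat_def)

lemma card_snoc_image: "card ((\<lambda>p. p @ [s]) ` A) = card A"
  by (rule card_image) (simp add: inj_on_def)

lemma card_bounded_paths_to_Suc:
  assumes "h \<le> K"
  shows "card (bounded_paths_to (Suc N) K h) =
    (if h = 0 then 0 else card (bounded_paths_to N K (h - 1))) + card (bounded_paths_to N K (h + 1))"
  using assms
  by (subst bounded_paths_to_Suc, simp, subst card_Un_disjoint) (auto simp: finite_bounded_paths_to card_snoc_image)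

lemma card_bounded_paths_to:
  "h \<le> K \<Longrightarrow> int (card (bounded_paths_to N K h)) = (transfer_mat K ^\<^sub>m N) $$ (h, 0)"
proof (induction N arbitrary: h)
  case 0
  then show ?case
    by (simp add: bounded_paths_to_0 transfer_mat_def)
next
  case (Suc N)
  have "(transfer_mat K ^\<^sub>m Suc N) $$ (h, 0) = (transfer_mat K * transfer_mat K ^\<^sub>m N) $$ (h, 0)"
    using pow_mat_Suc_left[of "transfer_mat K" "Suc K" N] by (simp add: transfer_mat_def)
  also have "\<dots> = (if 0 < h then (transfer_mat K ^\<^sub>m N) $$ (h - 1, 0) else 0)
      + (if h < K then (transfer_mat K ^\<^sub>m N) $$ (h + 1, 0) else 0)"
    unfolding transfer_mat_def using Suc.prems by (subst tridiag_mult_index) auto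
  also have "\<dots> = int (card (bounded_paths_to (Suc N) K h))"
    using Suc by (simp add: card_bounded_paths_to_Suc bounded_paths_to_above)
  finally show ?case ..
qed

lemma a_eq_sum_transfer_mat: "a N K = (\<Sum>h<Suc K. (transfer_mat K ^\<^sub>m N) $$ (h, 0))"
proof -
  have "bounded_paths N K = (\<Union>h\<le>K. bounded_paths_to N K h)"
  proof (intro Set.set_eqI iffI)
    fix ss assume ss: "ss \<in> bounded_paths N K"
    then have "0 \<le> height ss N" "height ss N \<le> int K"
      by (simp_all add: bounded_paths_def)
    then show "ss \<in> (\<Union>h\<le>K. bounded_paths_to N K h)"
      using ss by (intro UN_I[of "nat (height ss N)"]) (simp_all add: bounded_paths_to_def)
  qed (auto simp: bounded_paths_to_def)
  moreover have "card (\<Union>h\<le>K. bounded_paths_to N K h) = (\<Sum>h\<le>K. card (bounded_paths_to N K h))"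
    by (rule card_UN_disjoint) (auto simp: finite_bounded_paths_to, auto simp: bounded_paths_to_def)
  ultimately have "card (bounded_paths N K) = (\<Sum>h\<le>K. card (bounded_paths_to N K h))"
    by simp
  then show ?thesis
    by (simp add: a_def card_bounded_paths_to lessThan_Suc_atMost)
qed

definition fold_mat :: "nat \<Rightarrow> int mat" where
  "fold_mat M = mat (Suc M) (Suc (2 * M)) (\<lambda>(j, h). if j \<le> h \<and> h + j \<le> 2 * M then 1 else 0)"

definition folded_transfer_mat :: "nat \<Rightarrow> int mat" where
  "folded_transfer_mat M =
    tridiag (Suc M) (\<lambda>i. (if i = 0 then 1 else 0) - (if i = M then 1 else 0)) (\<lambda>_. 1) (\<lambda>_. 1)"

lemma fold_mat_carrier: "fold_mat M \<in> carrier_mat (Suc M) (Suc (2 * M))"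
  by (simp add: fold_mat_def)

lemma fold_mat_transfer_mat: "fold_mat M * transfer_mat (2 * M) = folded_transfer_mat M * fold_mat M"
proof (rule eq_matI)
  fix j h assume "j < dim_row (folded_transfer_mat M * fold_mat M)"
    "h < dim_col (folded_transfer_mat M * fold_mat M)"
  then have j: "j < Suc M" and h: "h < Suc (2 * M)"
    by (simp_all add: folded_transfer_mat_def fold_mat_def)
  have "(fold_mat M * transfer_mat (2 * M)) $$ (j, h) =
      (if 0 < h then fold_mat M $$ (j, h - 1) else 0) + (if h < 2 * M then fold_mat M $$ (j, h + 1) else 0)"
    unfolding transfer_mat_def using j h by (subst mult_tridiag_index[OF fold_mat_carrier]) auto
  also have "\<dots> = (if 0 < j then fold_mat M $$ (j - 1, h) else 0)
      + ((if j = 0 then 1 else 0) - (if j = M then 1 else 0)) * fold_mat M $$ (j, h)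
      + (if j < M then fold_mat M $$ (j + 1, h) else 0)"
  proof -
    consider "h + 1 < j" | "h + 1 = j" | "h = j" | "j < h" "h + j < 2 * M" | "h + j = 2 * M"
      | "h + j = 2 * M + 1" | "2 * M + 1 < h + j"
      by linarith
    then show ?thesis
      using j h by cases (auto simp: fold_mat_def)
  qed
  also have "\<dots> = (folded_transfer_mat M * fold_mat M) $$ (j, h)"
    unfolding folded_transfer_mat_def using j h by (subst tridiag_mult_index[OF fold_mat_carrier]) auto
  finally show "(fold_mat M * transfer_mat (2 * M)) $$ (j, h) = (folded_transfer_mat M * fold_mat M) $$ (j, h)" .
qed (simp_all add: fold_mat_def folded_transfer_mat_def transfer_mat_def)

lemma folded_transfer_mat_carrier: "folded_transfer_mat M \<in> carrier_mat (Suc M) (Suc M)"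
  by (simp add: folded_transfer_mat_def)

lemma a_even_eq_folded_transfer_mat: "a N (2 * M) = (folded_transfer_mat M ^\<^sub>m N) $$ (0, 0)"
proof -
  have T: "transfer_mat (2 * M) ^\<^sub>m N \<in> carrier_mat (Suc (2 * M)) (Suc (2 * M))"
    using transfer_mat_carrier by (rule pow_carrier_mat)
  have "a N (2 * M) = (\<Sum>h<Suc (2 * M). fold_mat M $$ (0, h) * (transfer_mat (2 * M) ^\<^sub>m N) $$ (h, 0))"
    by (simp add: a_eq_sum_transfer_mat fold_mat_def)
  also have "\<dots> = (fold_mat M * transfer_mat (2 * M) ^\<^sub>m N) $$ (0, 0)"
    using T by (simp add: index_mult_mat_sum[OF fold_mat_carrier])
  also have "\<dots> = (folded_transfer_mat M ^\<^sub>m N * fold_mat M) $$ (0, 0)"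
    by (simp add: intertwining_pow_mat[OF fold_mat_carrier transfer_mat_carrier
        folded_transfer_mat_carrier fold_mat_transfer_mat])
  also have "\<dots> = (folded_transfer_mat M ^\<^sub>m N) $$ (0, 0)"
    by (rule mult_mat_unit_col[of _ "Suc M" "Suc M" _ "Suc (2 * M)"])
      (auto simp: folded_transfer_mat_carrier fold_mat_carrier fold_mat_def)
  finally show ?thesis .
qed

definition refold_mat :: "nat \<Rightarrow> int mat" where
  "refold_mat k = mat (2 * k) (Suc (2 * k))
    (\<lambda>(h, j). if j = h then (if even h then 1 else -1) else if j = h + 1 then 1 else 0)"

definition alt_transfer_mat :: "nat \<Rightarrow> int mat" where
  "alt_transfer_mat k = tridiag (2 * k) (\<lambda>i. if even i then 2 else -2) (\<lambda>_. 1) (\<lambda>_. -1)"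

lemma refold_mat_carrier: "refold_mat k \<in> carrier_mat (2 * k) (Suc (2 * k))"
  by (simp add: refold_mat_def)

lemma alt_transfer_mat_carrier: "alt_transfer_mat k \<in> carrier_mat (2 * k) (2 * k)"
  by (simp add: alt_transfer_mat_def)

lemma refold_mat_folded_transfer_mat:
  "refold_mat k * folded_transfer_mat (2 * k) = alt_transfer_mat k * refold_mat k"
proof (rule eq_matI)
  fix h j assume "h < dim_row (alt_transfer_mat k * refold_mat k)"
    "j < dim_col (alt_transfer_mat k * refold_mat k)"
  then have h: "h < 2 * k" and j: "j < Suc (2 * k)"
    by (simp_all add: alt_transfer_mat_def refold_mat_def)
  have "(refold_mat k * folded_transfer_mat (2 * k)) $$ (h, j) =
      (if 0 < j then refold_mat k $$ (h, j - 1) else 0)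
      + refold_mat k $$ (h, j) * ((if j = 0 then 1 else 0) - (if j = 2 * k then 1 else 0))
      + (if j < 2 * k then refold_mat k $$ (h, j + 1) else 0)"
    unfolding folded_transfer_mat_def using h j by (subst mult_tridiag_index[OF refold_mat_carrier]) auto
  also have "\<dots> = (if 0 < h then - refold_mat k $$ (h - 1, j) else 0)
      + (if even h then 2 else -2) * refold_mat k $$ (h, j)
      + (if h + 1 < 2 * k then refold_mat k $$ (h + 1, j) else 0)"
  proof -
    consider "j + 1 < h" | "j + 1 = h" | "j = h" | "j = h + 1" | "j = h + 2" | "h + 2 < j"
      by linarith
    then show ?thesis
      using h j by cases (auto simp: refold_mat_def)
  qed
  also have "\<dots> = (alt_transfer_mat k * refold_mat k) $$ (h, j)"
    unfolding alt_transfer_mat_def using h j by (subst tridiag_mult_index[OF refold_mat_carrier]) auto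
  finally show "(refold_mat k * folded_transfer_mat (2 * k)) $$ (h, j) = (alt_transfer_mat k * refold_mat k) $$ (h, j)" .
qed (simp_all add: refold_mat_def alt_transfer_mat_def folded_transfer_mat_def)

lemma a_4k_eq_alt_transfer_mat:
  assumes "1 \<le> k"
  shows "a (Suc N) (4 * k) = (alt_transfer_mat k ^\<^sub>m N) $$ (0, 0)"
proof -
  let ?B = "folded_transfer_mat (2 * k)"
  have B: "?B ^\<^sub>m N \<in> carrier_mat (Suc (2 * k)) (Suc (2 * k))"
    using folded_transfer_mat_carrier by (rule pow_carrier_mat)
  have first_row: "row ?B 0 = row (refold_mat k) 0"
    using assms by (intro eq_vecI) (auto simp: folded_transfer_mat_def tridiag_def refold_mat_def)
  have "a (Suc N) (4 * k) = (?B ^\<^sub>m Suc N) $$ (0, 0)"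
    using a_even_eq_folded_transfer_mat[of "Suc N" "2 * k"] by (simp add: mult.assoc)
  also have "\<dots> = (?B * ?B ^\<^sub>m N) $$ (0, 0)"
    by (simp only: pow_mat_Suc_left[OF folded_transfer_mat_carrier])
  also have "\<dots> = row ?B 0 \<bullet> col (?B ^\<^sub>m N) 0"
    using B folded_transfer_mat_carrier[of "2 * k"] by (intro index_mult_mat) auto
  also have "\<dots> = (refold_mat k * ?B ^\<^sub>m N) $$ (0, 0)"
    unfolding first_row using assms B refold_mat_carrier[of k] by (intro index_mult_mat[symmetric]) auto
  also have "\<dots> = (alt_transfer_mat k ^\<^sub>m N * refold_mat k) $$ (0, 0)"
    by (simp add: intertwining_pow_mat[OF refold_mat_carrier folded_transfer_mat_carrier
        alt_transfer_mat_carrier refold_mat_folded_transfer_mat])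
  also have "\<dots> = (alt_transfer_mat k ^\<^sub>m N) $$ (0, 0)"
    using assms by (intro mult_mat_unit_col[of _ "2 * k" "2 * k" _ "Suc (2 * k)"])
      (auto simp: alt_transfer_mat_carrier refold_mat_carrier refold_mat_def)
  finally show ?thesis .
qed

section \<open>The Hankel determinants\<close>

lemma det_tridiag_diag_first_one:
  "det (tridiag n (\<lambda>i. if i = 0 then 1 else 0) (\<lambda>_. 1) (\<lambda>_. 1)) = ((-1) ^ (n div 2) :: int)"
  by (rule det_tridiag_eqI) simp_all

lemma det_folded_transfer_mat_odd: "det (folded_transfer_mat (Suc (2 * p))) = (-1) ^ Suc p * 2"
proof -
  define d :: "nat \<Rightarrow> int" where "d i = (if i = 0 then 1 else 0) - (if i = Suc (2 * p) then 1 else 0)" for i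
  have minor:
    "tridiag n d (\<lambda>_. 1) (\<lambda>_. 1) = tridiag n (\<lambda>i. if i = 0 then 1 else 0) (\<lambda>_. 1) (\<lambda>_. 1)"
    if "n \<le> Suc (2 * p)" for n
    using that by (intro tridiag_cong) (simp add: d_def)
  have "det (folded_transfer_mat (Suc (2 * p))) =
      d (Suc (2 * p)) * det (tridiag (Suc (2 * p)) d (\<lambda>_. 1) (\<lambda>_. 1))
      - det (tridiag (2 * p) d (\<lambda>_. 1) (\<lambda>_. 1))"
    unfolding folded_transfer_mat_def d_def[abs_def] by (simp add: det_tridiag_Suc_Suc)
  also have "\<dots> = (-1) ^ Suc p * 2"
    by (simp add: minor det_tridiag_diag_first_one d_def)
  finally show ?thesis .
qed

lemma det_alt_transfer_mat: "det (alt_transfer_mat k) = (-1) ^ k * (2 * int k + 1)"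
proof -
  define f :: "nat \<Rightarrow> int" where "f n = (-1) ^ (n div 2) * (int n + 1)" for n
  have "det (alt_transfer_mat k) = f (2 * k)"
    unfolding alt_transfer_mat_def
  proof (rule det_tridiag_eqI)
    fix n
    show "f (Suc (Suc n)) = (if even (Suc n) then 2 else -2) * f (Suc n) - 1 * -1 * f n"
      by (cases "even n") (auto simp: f_def elim!: evenE oddE simp: algebra_simps)
  qed (simp_all add: f_def)
  then show ?thesis
    by (simp add: f_def)
qed

lemma prod_lessThan_double_minus_one_power: "(\<Prod>i<2 * k. (-1 :: 'a :: comm_ring_1) ^ i) = (-1) ^ k"
proof (induction k)
  case 0
  then show ?case by simp
next
  case (Suc k)
  have "(\<Prod>i<2 * Suc k. (-1 :: 'a) ^ i) = (\<Prod>i<2 * k. (-1) ^ i) * ((-1) ^ (2 * k) * (-1) ^ Suc (2 * k))"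
    by simp
  then show ?case
    using Suc by simp
qed

lemma det_hankel_a_4k:
  assumes "1 \<le> k"
  shows "det (mat (2 * k) (2 * k) (\<lambda>(i, j). a (n + i + j + 1) (4 * k))) = (-1) ^ (k * Suc n) * (2 * int k + 1) ^ n"
proof -
  have "mat (2 * k) (2 * k) (\<lambda>(i, j). a (n + i + j + 1) (4 * k)) =
      mat (2 * k) (2 * k) (\<lambda>(i, j). (alt_transfer_mat k ^\<^sub>m (n + i + j)) $$ (0, 0))"
    using a_4k_eq_alt_transfer_mat[OF assms] by (intro eq_matI) auto
  moreover have "det (mat (2 * k) (2 * k) (\<lambda>(i, j). (alt_transfer_mat k ^\<^sub>m (n + i + j)) $$ (0, 0))) =
      (\<Prod>i<2 * k. (\<Prod>t<i. 1) * (\<Prod>t<i. -1)) * det (alt_transfer_mat k) ^ n"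
    unfolding alt_transfer_mat_def by (rule det_hankel_tridiag_pow)
  ultimately have "det (mat (2 * k) (2 * k) (\<lambda>(i, j). a (n + i + j + 1) (4 * k))) =
      (-1) ^ k * ((-1) ^ k * (2 * int k + 1)) ^ n"
    by (simp add: det_alt_transfer_mat prod_lessThan_double_minus_one_power)
  also have "\<dots> = (-1) ^ (k * Suc n) * (2 * int k + 1) ^ n"
    by (simp only: power_mult_distrib power_add power_mult mult.assoc mult_Suc_right)
  finally show ?thesis .
qed

lemma det_hankel_a_4k_minus_2:
  assumes "1 \<le> k"
  shows "det (mat (2 * k) (2 * k) (\<lambda>(i, j). a (n + i + j) (4 * k - 2))) = (-1) ^ (k * n) * 2 ^ n"
proof -
  obtain p where k: "k = Suc p"
    using assms by (cases k) auto
  have "a N (4 * k - 2) = (folded_transfer_mat (Suc (2 * p)) ^\<^sub>m N) $$ (0, 0)" for N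
    using a_even_eq_folded_transfer_mat[of N "Suc (2 * p)"] k by simp
  moreover have "2 * k = Suc (Suc (2 * p))"
    using k by simp
  ultimately have "mat (2 * k) (2 * k) (\<lambda>(i, j). a (n + i + j) (4 * k - 2)) =
      mat (Suc (Suc (2 * p))) (Suc (Suc (2 * p)))
        (\<lambda>(i, j). (folded_transfer_mat (Suc (2 * p)) ^\<^sub>m (n + i + j)) $$ (0, 0))"
    by simp
  moreover have "det (mat (Suc (Suc (2 * p))) (Suc (Suc (2 * p)))
        (\<lambda>(i, j). (folded_transfer_mat (Suc (2 * p)) ^\<^sub>m (n + i + j)) $$ (0, 0))) =
      (\<Prod>i<Suc (Suc (2 * p)). (\<Prod>t<i. 1) * (\<Prod>t<i. 1)) * det (folded_transfer_mat (Suc (2 * p))) ^ n"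
    unfolding folded_transfer_mat_def by (rule det_hankel_tridiag_pow)
  ultimately have "det (mat (2 * k) (2 * k) (\<lambda>(i, j). a (n + i + j) (4 * k - 2))) = ((-1) ^ Suc p * 2) ^ n"
    by (simp add: det_folded_transfer_mat_odd)
  also have "\<dots> = (-1) ^ (k * n) * 2 ^ n"
    by (simp only: k power_mult_distrib power_mult)
  finally show ?thesis .
qed

theorem theorem51:
  fixes n k :: nat
  assumes "k \<ge> 1"
  shows "det (mat (2*k) (2*k) (\<lambda>(i,j). a (n+i+j+1) (4*k)))
           = (-1) ^ nat \<bar>int k * (int n - 1)\<bar> * (2*int k+1) ^ n
       \<and> det (mat (2*k) (2*k) (\<lambda>(i,j). a (n+i+j) (4*k-2)))
           = (-1) ^ (k*n) * 2 ^ n"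
proof -
  have sign: "(-1 :: int) ^ (k * Suc n) = (-1) ^ nat \<bar>int k * (int n - 1)\<bar>"
  proof (cases n)
    case (Suc m)
    then have "k * Suc n = k * m + 2 * k" "nat \<bar>int k * (int n - 1)\<bar> = k * m"
      by (simp_all add: nat_mult_distrib)
    then show ?thesis
      by (simp add: power_add power_mult)
  qed simp
  show ?thesis
    unfolding sign[symmetric] using det_hankel_a_4k[OF assms] det_hankel_a_4k_minus_2[OF assms] ..
qed

end
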